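(* For $\Sigma(p_1,p_2,p_3)$ with $\frac1{p_1}+\frac1{p_2}+\frac1{p_3}<1$ and for $\Sigma(2,3,5)$, the coefficients satisfy $\lambda_0=1$, \[ \lambda_1=-\frac14\Bigl(\phi+P\Bigl(1-\frac1{p_1^2}-\frac1{p_2^2}-\frac1{p_3^2}\Bigr)\Bigr), \] \[ \lambda_2=\frac1{12}\Biggl(\frac{3\phi^2+12\phi-4}8+\frac{3P}4(\phi+2)\Bigl(1-\sum_{j=1}^3\frac1{p_j^2}\Bigr)+\frac{P^2}8\Bigl(2\Bigl(1-\sum_{j=1}^3\frac1{p_j^4}\Bigr)+5\Bigl(1-\sum_{j=1}^3\frac1{p_j^2}\Bigr)^2\Bigr)\Biggr), \] where $\phi=\phi(p_1,p_2,p_3)$.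
   Context: $p_1,p_2,p_3$ pairwise coprime positive integers, $P=p_1p_2p_3$, $\phi=3-\frac1P+12(s(p_2p_3,p_1)+s(p_1p_3,p_2)+s(p_1p_2,p_3))$ with Dedekind sums $s(b,a)=\sum_{k=1}^{a-1}((k/a))((kb/a))$. The $\lambda_n$ are the coefficients of the formal power series $\tau_\infty=\sum_n\lambda_n(q-1)^n$ defined by: for $\sum1/p_j<1$, $q^{\phi/4-1/2}(q-1)\tau_\infty=\frac12\sum_{k\ge0}\frac{L(-2k,\chi_{2P}^{(1,1,1)})}{k!}(\frac{\log q}{4P})^k$, and for $\Sigma(2,3,5)$, $q^{121/120}(q-1)\tau_\infty=q^{1/120}+\frac12\sum_{k\ge0}\frac{L(-2k,\chi_{60}^{(1,1,1)})}{k!}(\frac{\log q}{120})^k$. Here $\chi_{2P}^{(1,1,1)}$ is the odd $2P$-periodic function with $\chi(n)=1$ if $n\equiv P(1+\sum_j\varepsilon_j/p_j)\pmod{2P}$ with signs of product $-1$, $-1$ if product $1$, $0$ otherwise ($\chi_{60}^{(1,1,1)}$ is $-1$ on $1,11,19,29$ and $+1$ on $31,41,49,59$ mod $60$); $L(-2k,\chi)=-\frac{(2P)^{2k}}{2k+1}\sum_{j=1}^{2P}\chi(j)B_{2k+1}(j/(2P))$, $B_n$ Bernoulli polynomials. *)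

theory Defs
  imports "HOL-Analysis.Analysis" "HOL-Computational_Algebra.Formal_Power_Series"
begin

definition sawtooth :: "real \<Rightarrow> real" where
  "sawtooth x = (if x \<in> \<int> then 0 else x - of_int \<lfloor>x\<rfloor> - 1/2)"

definition dedekind_sum :: "nat \<Rightarrow> nat \<Rightarrow> real" where
  "dedekind_sum b a = (\<Sum>k\<in>{1..<a}. sawtooth (real k / real a) * sawtooth (real (k * b) / real a))"

definition phi_inv :: "nat \<Rightarrow> nat \<Rightarrow> nat \<Rightarrow> real" where
  "phi_inv p1 p2 p3 = 3 - 1 / real (p1 * p2 * p3)
     + 12 * (dedekind_sum (p2 * p3) p1 + dedekind_sum (p1 * p3) p2 + dedekind_sum (p1 * p2) p3)"

text \<open>Bernoulli numbers (convention B_1 = -1/2) and Bernoulli polynomials.\<close>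
fun bernoulli_num :: "nat \<Rightarrow> real" where
  "bernoulli_num n = (if n = 0 then 1 else
     - (\<Sum>k\<in>{..<n}. real ((n + 1) choose k) * bernoulli_num k) / real (n + 1))"

definition bernoulli_poly :: "nat \<Rightarrow> real \<Rightarrow> real" where
  "bernoulli_poly n x = (\<Sum>k\<le>n. real (n choose k) * bernoulli_num k * x ^ (n - k))"

text \<open>Residue P(1 + e1/p1 + e2/p2 + e3/p3) (an integer).\<close>
definition chi_res :: "nat \<Rightarrow> nat \<Rightarrow> nat \<Rightarrow> int \<Rightarrow> int \<Rightarrow> int \<Rightarrow> int" where
  "chi_res p1 p2 p3 e1 e2 e3 = int (p1 * p2 * p3) + e1 * int (p2 * p3) + e2 * int (p1 * p3) + e3 * int (p1 * p2)"

definition chi111 :: "nat \<Rightarrow> nat \<Rightarrow> nat \<Rightarrow> int \<Rightarrow> real" where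
  "chi111 p1 p2 p3 n =
    (if \<exists>e1\<in>{-1,1}. \<exists>e2\<in>{-1,1}. \<exists>e3\<in>{-1,1}. e1 * e2 * e3 = -1 \<and>
          n mod (2 * int (p1 * p2 * p3)) = chi_res p1 p2 p3 e1 e2 e3 mod (2 * int (p1 * p2 * p3)) then 1
     else if \<exists>e1\<in>{-1,1}. \<exists>e2\<in>{-1,1}. \<exists>e3\<in>{-1,1}. e1 * e2 * e3 = 1 \<and>
          n mod (2 * int (p1 * p2 * p3)) = chi_res p1 p2 p3 e1 e2 e3 mod (2 * int (p1 * p2 * p3)) then -1
     else 0)"

text \<open>L(-2k, chi) via Bernoulli polynomials.\<close>
definition L_val :: "nat \<Rightarrow> nat \<Rightarrow> nat \<Rightarrow> nat \<Rightarrow> real" where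
  "L_val p1 p2 p3 k = - ((2 * real (p1 * p2 * p3)) ^ (2 * k) / real (2 * k + 1))
     * (\<Sum>j\<in>{1..2 * p1 * p2 * p3}. chi111 p1 p2 p3 (int j)
          * bernoulli_poly (2 * k + 1) (real j / (2 * real (p1 * p2 * p3))))"

text \<open>Formal power series in the variable X = q - 1: log q = ln(1+X) = fps_ln 1,
  q^a = (1+X)^a = fps_binomial a.\<close>
definition L_series :: "nat \<Rightarrow> nat \<Rightarrow> nat \<Rightarrow> real \<Rightarrow> real fps" where
  "L_series p1 p2 p3 c =
     Abs_fps (\<lambda>k. L_val p1 p2 p3 k / fact k) oo (fps_const (1 / c) * fps_ln 1)"

definition tau_eq_hyp :: "nat \<Rightarrow> nat \<Rightarrow> nat \<Rightarrow> real fps \<Rightarrow> bool" where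
  "tau_eq_hyp p1 p2 p3 \<tau> \<longleftrightarrow>
     fps_binomial (phi_inv p1 p2 p3 / 4 - 1/2) * fps_X * \<tau>
       = fps_const (1/2) * L_series p1 p2 p3 (4 * real (p1 * p2 * p3))"

definition tau_eq_235 :: "real fps \<Rightarrow> bool" where
  "tau_eq_235 \<tau> \<longleftrightarrow>
     fps_binomial (121/120) * fps_X * \<tau>
       = fps_binomial (1/120) + fps_const (1/2) * L_series 2 3 5 120"

end

theory Submission
  imports Defs
begin

(* Put a = phi/4 - 1/2. Both defining equations have the shape (1+X)^a X tau = R with R_0 = 0, so
   tau = (1+X)^(-a) R / X exists and is unique, and lambda_0, lambda_1, lambda_2 are explicit in a and
   R_1, R_2, R_3. These involve L(-2k, chi) only for k <= 3.
   When sum 1/p_j < 1, the eight residues P (1 + sum e_j/p_j) lie strictly between 0 and 2P and are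
   pairwise distinct by coprimality, so L(-2k, chi) is a signed sum of B_(2k+1)((1 + sum e_j/p_j)/2)
   over the sign vectors e: a polynomial in the 1/p_j, computed from B_1, B_3, B_5, B_7.
   For Sigma(2,3,5) two residues wrap around modulo 60, which lowers every L(-2k, chi) by 2; the
   term q^(1/120) compensates exactly, and a direct computation gives the same R_1, R_2, R_3 as the
   hyperbolic formulas. *)

lemma bernoulli_num_Suc:
  "bernoulli_num (Suc n) =
     - (\<Sum>k<Suc n. real (Suc (Suc n) choose k) * bernoulli_num k) / real (Suc (Suc n))"
  by (subst bernoulli_num.simps) simp

lemma bernoulli_num_1: "bernoulli_num 1 = -1/2"
  using bernoulli_num_Suc[of 0] by simp

lemma bernoulli_num_2: "bernoulli_num 2 = 1/6"
  using bernoulli_num_Suc[of 1] by (simp add: lessThan_Suc bernoulli_num_1 numeral_2_eq_2)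

lemma bernoulli_num_3: "bernoulli_num 3 = 0"
  using bernoulli_num_Suc[of 2]
  by (simp add: lessThan_Suc bernoulli_num_1 bernoulli_num_2 eval_nat_numeral)

lemma bernoulli_num_4: "bernoulli_num 4 = -1/30"
  using bernoulli_num_Suc[of 3]
  by (simp add: lessThan_Suc bernoulli_num_1 bernoulli_num_2 bernoulli_num_3 eval_nat_numeral)

lemma bernoulli_num_5: "bernoulli_num 5 = 0"
  using bernoulli_num_Suc[of 4]
  by (simp add: lessThan_Suc bernoulli_num_1 bernoulli_num_2 bernoulli_num_3 bernoulli_num_4
      eval_nat_numeral)

lemma bernoulli_num_6: "bernoulli_num 6 = 1/42"
  using bernoulli_num_Suc[of 5]
  by (simp add: lessThan_Suc bernoulli_num_1 bernoulli_num_2 bernoulli_num_3 bernoulli_num_4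
      bernoulli_num_5 eval_nat_numeral)

lemma bernoulli_num_7: "bernoulli_num 7 = 0"
  using bernoulli_num_Suc[of 6]
  by (simp add: lessThan_Suc bernoulli_num_1 bernoulli_num_2 bernoulli_num_3 bernoulli_num_4
      bernoulli_num_5 bernoulli_num_6 eval_nat_numeral)

lemmas bernoulli_num_values =
  bernoulli_num_1 bernoulli_num_2 bernoulli_num_3 bernoulli_num_4
  bernoulli_num_5 bernoulli_num_6 bernoulli_num_7

lemma bernoulli_poly_1: "bernoulli_poly 1 x = x - 1/2"
  by (simp add: bernoulli_poly_def bernoulli_num_values)

lemma bernoulli_poly_3: "bernoulli_poly 3 x = x^3 - 3/2*x^2 + 1/2*x"
  by (simp add: bernoulli_poly_def atMost_Suc bernoulli_num_values eval_nat_numeral)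

lemma bernoulli_poly_5: "bernoulli_poly 5 x = x^5 - 5/2*x^4 + 5/3*x^3 - 1/6*x"
  by (simp add: bernoulli_poly_def atMost_Suc bernoulli_num_values eval_nat_numeral)

lemma bernoulli_poly_7:
  "bernoulli_poly 7 x = x^7 - 7/2*x^6 + 7/2*x^5 - 7/6*x^3 + 1/6*x"
  by (simp add: bernoulli_poly_def atMost_Suc bernoulli_num_values eval_nat_numeral)

definition signs :: "(int \<times> int \<times> int) set" where
  "signs = {-1,1} \<times> {-1,1} \<times> {-1,1}"

lemma signs_explicit:
  "signs = {(1,1,1), (1,1,-1), (1,-1,1), (1,-1,-1), (-1,1,1), (-1,1,-1), (-1,-1,1), (-1,-1,-1)}"
  by (auto simp: signs_def)

lemma sum_signs:
  "(\<Sum>e\<in>signs. g e) = g (1,1,1) + g (1,1,-1) + g (1,-1,1) + g (1,-1,-1)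
     + g (-1,1,1) + g (-1,1,-1) + g (-1,-1,1) + g (-1,-1,-1)"
  unfolding signs_explicit by (simp add: add.assoc)

definition sign_sum :: "(real \<Rightarrow> real) \<Rightarrow> real \<Rightarrow> real \<Rightarrow> real \<Rightarrow> real" where
  "sign_sum f a b c =
     (\<Sum>(e1, e2, e3)\<in>signs.
        - of_int (e1 * e2 * e3) * f ((1 + of_int e1 * a + of_int e2 * b + of_int e3 * c) / 2))"

lemma sign_sum_bernoulli_poly_1: "sign_sum (bernoulli_poly 1) a b c = 0"
  unfolding sign_sum_def sum_signs bernoulli_poly_1 by (simp add: field_simps)

lemma sign_sum_bernoulli_poly_3: "sign_sum (bernoulli_poly 3) a b c = -6*a*b*c"
  unfolding sign_sum_def sum_signs bernoulli_poly_3 by (simp add: field_simps) algebra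

lemma sign_sum_bernoulli_poly_5:
  "sign_sum (bernoulli_poly 5) a b c = 5*a*b*c * (1 - a^2 - b^2 - c^2)"
  unfolding sign_sum_def sum_signs bernoulli_poly_5 by (simp add: field_simps) algebra

lemma sign_sum_bernoulli_poly_7:
  "sign_sum (bernoulli_poly 7) a b c = a*b*c * (- 49/8 + 35/4 * (a^2 + b^2 + c^2)
     - 21/8 * (a^4 + b^4 + c^4) - 35/4 * (a^2*b^2 + a^2*c^2 + b^2*c^2))"
  unfolding sign_sum_def sum_signs bernoulli_poly_7 by (simp add: field_simps) algebra

definition chi111_residue :: "nat \<Rightarrow> nat \<Rightarrow> nat \<Rightarrow> int \<times> int \<times> int \<Rightarrow> int" where
  "chi111_residue p1 p2 p3 =
     (\<lambda>(e1, e2, e3). chi_res p1 p2 p3 e1 e2 e3 mod (2 * int (p1 * p2 * p3)))"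

lemma chi111_residue_bounds:
  assumes "p1 * p2 * p3 > 0"
  shows "0 \<le> chi111_residue p1 p2 p3 e" "chi111_residue p1 p2 p3 e < 2 * int (p1 * p2 * p3)"
  using assms by (auto simp: chi111_residue_def split: prod.split)

lemma chi111_altdef:
  fixes p1 p2 p3 :: nat and n :: int
  defines "M \<equiv> 2 * int (p1 * p2 * p3)"
  shows "chi111 p1 p2 p3 n =
    (if \<exists>(d1, d2, d3)\<in>signs. d1 * d2 * d3 = -1 \<and> n mod M = chi111_residue p1 p2 p3 (d1, d2, d3)
     then 1
     else if \<exists>(d1, d2, d3)\<in>signs. d1 * d2 * d3 = 1 \<and> n mod M = chi111_residue p1 p2 p3 (d1, d2, d3)
     then -1 else 0)"
proof -
  have "(\<exists>d1\<in>{-1,1}. \<exists>d2\<in>{-1,1}. \<exists>d3\<in>{-1,1}.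
           d1 * d2 * d3 = s \<and> n mod M = chi_res p1 p2 p3 d1 d2 d3 mod M)
        \<longleftrightarrow> (\<exists>(d1, d2, d3)\<in>signs.
               d1 * d2 * d3 = s \<and> n mod M = chi111_residue p1 p2 p3 (d1, d2, d3))"
    for s
    unfolding signs_def chi111_residue_def M_def by auto
  then show ?thesis
    unfolding chi111_def M_def by presburger
qed

lemma chi111_at_residue:
  assumes inj: "inj_on (chi111_residue p1 p2 p3) signs" and e: "(e1, e2, e3) \<in> signs"
    and n: "n mod (2 * int (p1 * p2 * p3)) = chi111_residue p1 p2 p3 (e1, e2, e3)"
  shows "chi111 p1 p2 p3 n = - of_int (e1 * e2 * e3)"
proof -
  have hit: "(\<exists>(d1, d2, d3)\<in>signs. d1 * d2 * d3 = s \<and>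
               n mod (2 * int (p1 * p2 * p3)) = chi111_residue p1 p2 p3 (d1, d2, d3))
             \<longleftrightarrow> e1 * e2 * e3 = s" for s
    using e n inj_onD[OF inj _ _ e] by (auto simp: n)
  have "e1 * e2 * e3 = 1 \<or> e1 * e2 * e3 = -1"
    using e by (auto simp: signs_def)
  then show ?thesis
    unfolding chi111_altdef hit by (auto simp flip: of_int_mult)
qed

lemma chi111_eq_0:
  assumes "n mod (2 * int (p1 * p2 * p3)) \<notin> chi111_residue p1 p2 p3 ` signs"
  shows "chi111 p1 p2 p3 n = 0"
  using assms unfolding chi111_altdef by (auto simp: image_iff)

lemma sum_chi111:
  fixes f :: "nat \<Rightarrow> real"
  assumes inj: "inj_on (chi111_residue p1 p2 p3) signs"
    and nz: "0 \<notin> chi111_residue p1 p2 p3 ` signs" and pos: "p1 * p2 * p3 > 0"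
  shows "(\<Sum>j\<in>{1..2 * p1 * p2 * p3}. chi111 p1 p2 p3 (int j) * f j) =
         (\<Sum>(e1, e2, e3)\<in>signs.
            - of_int (e1 * e2 * e3) * f (nat (chi111_residue p1 p2 p3 (e1, e2, e3))))"
proof -
  define M where "M = 2 * int (p1 * p2 * p3)"
  define r where "r = chi111_residue p1 p2 p3"
  have r_bounds: "0 \<le> r e" "r e < M" for e
    using chi111_residue_bounds[OF pos] by (simp_all add: r_def M_def)
  have r_nz: "r e \<noteq> 0" if "e \<in> signs" for e
    using nz that by (auto simp: r_def)
  have J_sub: "(nat \<circ> r) ` signs \<subseteq> {1..2 * p1 * p2 * p3}"
  proof
    fix j assume "j \<in> (nat \<circ> r) ` signs"
    then obtain e where "e \<in> signs" "j = nat (r e)" by auto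
    moreover have "0 < r e" "r e \<le> M"
      using r_bounds[of e] r_nz[OF \<open>e \<in> signs\<close>] by auto
    ultimately show "j \<in> {1..2 * p1 * p2 * p3}"
      by (simp add: M_def nat_le_iff)
  qed
  have outside: "chi111 p1 p2 p3 (int j) = 0"
    if j: "j \<in> {1..2 * p1 * p2 * p3} - (nat \<circ> r) ` signs" for j
  proof (rule chi111_eq_0, fold M_def r_def, rule notI)
    assume "int j mod M \<in> r ` signs"
    then obtain e where e: "e \<in> signs" "int j mod M = r e" by auto
    have "int j \<noteq> M"
      using e r_nz[OF e(1)] by auto
    moreover have "int j \<le> int (2 * (p1 * p2 * p3))"
      using j by (simp only: of_nat_le_iff) (simp add: mult.assoc)
    ultimately have "int j mod M = int j"
      by (intro mod_pos_pos_trivial) (auto simp: M_def)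
    with e have "j = nat (r e)"
      by simp
    with e j show False
      by auto
  qed
  have inj_J: "inj_on (nat \<circ> r) signs"
    using inj r_bounds by (auto simp: inj_on_def r_def eq_nat_nat_iff)
  have at_r: "chi111 p1 p2 p3 (r (e1, e2, e3)) = - of_int (e1 * e2 * e3)"
    if "(e1, e2, e3) \<in> signs" for e1 e2 e3
  proof -
    have "r (e1, e2, e3) mod M = r (e1, e2, e3)"
      by (intro mod_pos_pos_trivial r_bounds)
    then show ?thesis
      using chi111_at_residue[OF inj that] by (simp add: r_def M_def)
  qed
  have "(\<Sum>j\<in>{1..2 * p1 * p2 * p3}. chi111 p1 p2 p3 (int j) * f j)
        = (\<Sum>j\<in>(nat \<circ> r) ` signs. chi111 p1 p2 p3 (int j) * f j)"
    using J_sub outside by (intro sum.mono_neutral_right) auto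
  also have "\<dots> = (\<Sum>e\<in>signs. chi111 p1 p2 p3 (r e) * f (nat (r e)))"
    by (subst sum.reindex[OF inj_J]) (simp add: r_bounds)
  also have "\<dots> = (\<Sum>(e1, e2, e3)\<in>signs. - of_int (e1 * e2 * e3) * f (nat (r (e1, e2, e3))))"
    using at_r by (intro sum.cong) auto
  finally show ?thesis
    by (simp add: r_def)
qed

lemma coeff_eq_0_of_coprime_combination:
  fixes p q r :: nat and d1 d2 d3 :: int
  assumes "coprime p q" "coprime p r" "\<bar>d1\<bar> < int p"
    and "d1 * int (q * r) + d2 * int (p * r) + d3 * int (p * q) = 0"
  shows "d1 = 0"
proof (rule ccontr)
  assume "d1 \<noteq> 0"
  have "d1 * int (q * r) = int p * - (d2 * int r + d3 * int q)"
    using assms(4) by (simp add: algebra_simps)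
  then have "int p dvd d1 * int (q * r)"
    by simp
  moreover have "coprime (int p) (int (q * r))"
    using assms(1,2) by simp
  ultimately have "int p dvd d1"
    using coprime_dvd_mult_left_iff by blast
  then have "int p \<le> \<bar>d1\<bar>"
    using dvd_imp_le_int[OF \<open>d1 \<noteq> 0\<close>] by fastforce
  with assms(3) show False
    by simp
qed

lemma chi_res_eq_imp_signs_eq:
  assumes cop: "coprime p1 p2" "coprime p1 p3" "coprime p2 p3"
    and ge2: "p1 \<ge> 2" "p2 \<ge> 2" "p3 \<ge> 2"
    and e: "(e1, e2, e3) \<in> signs" and f: "(f1, f2, f3) \<in> signs"
    and eq: "chi_res p1 p2 p3 e1 e2 e3 = chi_res p1 p2 p3 f1 f2 f3"
  shows "(e1, e2, e3) = (f1, f2, f3)"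
proof -
  \<comment> \<open>The sign differences are halved because some p_j may be 2.\<close>
  have half: "x - y = 2 * ((x - y) div 2) \<and> \<bar>(x - y) div 2\<bar> \<le> 1
              \<and> ((x - y) div 2 = 0 \<longleftrightarrow> x = y)"
    if "x \<in> {-1, 1}" "y \<in> {-1, 1}" for x y :: int
    using that by auto
  define d1 d2 d3 where "d1 = (e1 - f1) div 2" "d2 = (e2 - f2) div 2" "d3 = (e3 - f3) div 2"
  have d: "e1 - f1 = 2 * d1" "e2 - f2 = 2 * d2" "e3 - f3 = 2 * d3"
    "\<bar>d1\<bar> \<le> 1" "\<bar>d2\<bar> \<le> 1" "\<bar>d3\<bar> \<le> 1"
    "d1 = 0 \<longleftrightarrow> e1 = f1" "d2 = 0 \<longleftrightarrow> e2 = f2" "d3 = 0 \<longleftrightarrow> e3 = f3"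
    using e f half unfolding d1_d2_d3_def signs_def by blast+
  have "(e1 - f1) * int (p2 * p3) + (e2 - f2) * int (p1 * p3) + (e3 - f3) * int (p1 * p2) = 0"
    using eq by (simp add: chi_res_def algebra_simps)
  then have comb: "d1 * int (p2 * p3) + d2 * int (p1 * p3) + d3 * int (p1 * p2) = 0"
    unfolding d(1-3) by (simp add: algebra_simps)
  have "d1 = 0"
    using coeff_eq_0_of_coprime_combination[of p1 p2 p3 d1 d2 d3] cop ge2 d comb by simp
  moreover have "d2 = 0"
    using coeff_eq_0_of_coprime_combination[of p2 p1 p3 d2 d1 d3] cop ge2 d comb
    by (simp add: coprime_commute algebra_simps)
  moreover have "d3 = 0"
    using coeff_eq_0_of_coprime_combination[of p3 p1 p2 d3 d1 d2] cop ge2 d comb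
    by (simp add: coprime_commute algebra_simps)
  ultimately show ?thesis
    using d by simp
qed

lemma ge_2_of_inverse_sum_less_1:
  fixes p1 p2 p3 :: nat
  assumes "p1 > 0" and hyp: "1 / real p1 + 1 / real p2 + 1 / real p3 < 1"
  shows "p1 \<ge> 2"
proof (rule ccontr)
  assume "\<not> p1 \<ge> 2"
  with \<open>p1 > 0\<close> have "p1 = 1"
    by simp
  with hyp have "1 / real p2 + 1 / real p3 < 0"
    by simp
  moreover have "0 \<le> 1 / real p2 + 1 / real p3"
    by simp
  ultimately show False
    by linarith
qed

lemma chi_res_bounds_hyperbolic:
  fixes p1 p2 p3 :: nat
  assumes pos: "p1 > 0" "p2 > 0" "p3 > 0" and hyp: "1 / real p1 + 1 / real p2 + 1 / real p3 < 1"
    and e: "(e1, e2, e3) \<in> signs"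
  shows "0 < chi_res p1 p2 p3 e1 e2 e3" "chi_res p1 p2 p3 e1 e2 e3 < 2 * int (p1 * p2 * p3)"
proof -
  define A B C P where "A = int (p2 * p3)" "B = int (p1 * p3)" "C = int (p1 * p2)"
    "P = int (p1 * p2 * p3)"
  have "real (p2 * p3) + real (p1 * p3) + real (p1 * p2) < real (p1 * p2 * p3)"
    using hyp pos by (simp add: field_simps)
  then have "A + B + C < P"
    unfolding A_B_C_P_def by linarith
  moreover have "A > 0" "B > 0" "C > 0"
    using pos by (simp_all add: A_B_C_P_def)
  moreover have "chi_res p1 p2 p3 e1 e2 e3 = P + e1 * A + e2 * B + e3 * C"
    by (simp add: chi_res_def A_B_C_P_def)
  ultimately have "0 < chi_res p1 p2 p3 e1 e2 e3 \<and> chi_res p1 p2 p3 e1 e2 e3 < 2 * P"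
    using e by (auto simp: signs_def)
  then show "0 < chi_res p1 p2 p3 e1 e2 e3" "chi_res p1 p2 p3 e1 e2 e3 < 2 * int (p1 * p2 * p3)"
    by (simp_all only: A_B_C_P_def)
qed

lemma chi111_residue_hyperbolic:
  fixes p1 p2 p3 :: nat
  assumes pos: "p1 > 0" "p2 > 0" "p3 > 0" and hyp: "1 / real p1 + 1 / real p2 + 1 / real p3 < 1"
    and e: "(e1, e2, e3) \<in> signs"
  shows "chi111_residue p1 p2 p3 (e1, e2, e3) = chi_res p1 p2 p3 e1 e2 e3"
  using chi_res_bounds_hyperbolic[OF pos hyp e] by (simp add: chi111_residue_def mod_pos_pos_trivial)

lemma inj_on_chi111_residue_hyperbolic:
  fixes p1 p2 p3 :: nat
  assumes pos: "p1 > 0" "p2 > 0" "p3 > 0"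
    and cop: "coprime p1 p2" "coprime p1 p3" "coprime p2 p3"
    and hyp: "1 / real p1 + 1 / real p2 + 1 / real p3 < 1"
  shows "inj_on (chi111_residue p1 p2 p3) signs"
proof (rule inj_onI)
  have ge2: "p1 \<ge> 2" "p2 \<ge> 2" "p3 \<ge> 2"
    using ge_2_of_inverse_sum_less_1[of p1 p2 p3] ge_2_of_inverse_sum_less_1[of p2 p1 p3]
      ge_2_of_inverse_sum_less_1[of p3 p1 p2] pos hyp
    by (simp_all add: ac_simps)
  fix e f
  assume "e \<in> signs" "f \<in> signs" "chi111_residue p1 p2 p3 e = chi111_residue p1 p2 p3 f"
  then show "e = f"
    using chi_res_eq_imp_signs_eq[OF cop ge2] chi111_residue_hyperbolic[OF pos hyp]
    by (cases e; cases f) auto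
qed

lemma L_val_hyperbolic:
  fixes p1 p2 p3 :: nat
  assumes pos: "p1 > 0" "p2 > 0" "p3 > 0"
    and cop: "coprime p1 p2" "coprime p1 p3" "coprime p2 p3"
    and hyp: "1 / real p1 + 1 / real p2 + 1 / real p3 < 1"
  shows "L_val p1 p2 p3 k = - ((2 * real (p1 * p2 * p3)) ^ (2 * k) / real (2 * k + 1))
           * sign_sum (bernoulli_poly (2 * k + 1)) (1 / real p1) (1 / real p2) (1 / real p3)"
proof -
  note residue = chi111_residue_hyperbolic[OF pos hyp]
  note inj_on_chi111_residue_hyperbolic[OF pos cop hyp]
  moreover have "0 \<notin> chi111_residue p1 p2 p3 ` signs"
    using chi_res_bounds_hyperbolic[OF pos hyp] residue by fastforce
  moreover have "p1 * p2 * p3 > 0"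
    using pos by simp
  ultimately have "(\<Sum>j\<in>{1..2 * p1 * p2 * p3}.
       chi111 p1 p2 p3 (int j) * bernoulli_poly (2 * k + 1) (real j / (2 * real (p1 * p2 * p3))))
     = (\<Sum>(e1, e2, e3)\<in>signs. - of_int (e1 * e2 * e3) * bernoulli_poly (2 * k + 1)
         (real (nat (chi111_residue p1 p2 p3 (e1, e2, e3))) / (2 * real (p1 * p2 * p3))))"
    by (rule sum_chi111)
  also have "\<dots> = sign_sum (bernoulli_poly (2 * k + 1)) (1 / real p1) (1 / real p2) (1 / real p3)"
  proof -
    have arg: "real (nat (chi111_residue p1 p2 p3 (e1, e2, e3))) / (2 * real (p1 * p2 * p3))
        = (1 + of_int e1 * (1 / real p1) + of_int e2 * (1 / real p2) + of_int e3 * (1 / real p3)) / 2"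
      if e: "(e1, e2, e3) \<in> signs" for e1 e2 e3
    proof -
      have "real (nat (chi111_residue p1 p2 p3 (e1, e2, e3))) = of_int (chi_res p1 p2 p3 e1 e2 e3)"
        using residue[OF e] chi_res_bounds_hyperbolic[OF pos hyp e] by simp
      then show ?thesis
        using pos by (simp add: chi_res_def field_simps)
    qed
    show ?thesis
      unfolding sign_sum_def by (intro sum.cong refl) (clarify, simp only: arg)
  qed
  finally show ?thesis
    unfolding L_val_def by simp
qed

lemma L_val_hyperbolic_values:
  fixes p1 p2 p3 :: nat
  assumes pos: "p1 > 0" "p2 > 0" "p3 > 0"
    and cop: "coprime p1 p2" "coprime p1 p3" "coprime p2 p3"
    and hyp: "1 / real p1 + 1 / real p2 + 1 / real p3 < 1"
  defines "P \<equiv> real (p1 * p2 * p3)"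
      and "S2 \<equiv> 1 / real p1 ^ 2 + 1 / real p2 ^ 2 + 1 / real p3 ^ 2"
      and "S4 \<equiv> 1 / real p1 ^ 4 + 1 / real p2 ^ 4 + 1 / real p3 ^ 4"
  shows "L_val p1 p2 p3 0 = 0"
    and "L_val p1 p2 p3 1 = 8 * P"
    and "L_val p1 p2 p3 2 = - 16 * P ^ 3 * (1 - S2)"
    and "L_val p1 p2 p3 3 = 8 * P ^ 5 * (7 - 10 * S2 - 2 * S4 + 5 * S2 ^ 2)"
proof -
  define a b c where "a = 1 / real p1" "b = 1 / real p2" "c = 1 / real p3"
  have P: "P * (a * b * c) = 1"
    using pos by (simp add: P_def a_b_c_def)
  have S: "S2 = a^2 + b^2 + c^2" "S4 = a^4 + b^4 + c^4"
    by (simp_all add: S2_def S4_def a_b_c_def power_one_over)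
  have L: "L_val p1 p2 p3 k = - ((2 * P) ^ (2 * k) / real (2 * k + 1))
             * sign_sum (bernoulli_poly (2 * k + 1)) a b c" for k
    using L_val_hyperbolic[OF pos cop hyp] by (simp add: P_def a_b_c_def)
  show "L_val p1 p2 p3 0 = 0"
    using L[of 0] sign_sum_bernoulli_poly_1[of a b c] by simp
  show "L_val p1 p2 p3 1 = 8 * P"
    using L[of 1] P by (simp add: sign_sum_bernoulli_poly_3 power2_eq_square)
  show "L_val p1 p2 p3 2 = - 16 * P ^ 3 * (1 - S2)"
    using L[of 2] P unfolding S by (simp add: sign_sum_bernoulli_poly_5) algebra
  show "L_val p1 p2 p3 3 = 8 * P ^ 5 * (7 - 10 * S2 - 2 * S4 + 5 * S2 ^ 2)"
    using L[of 3] P unfolding S by (simp add: sign_sum_bernoulli_poly_7) algebra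
qed

lemma fps_compose_nth_1_2_3:
  fixes A Y :: "'a::comm_ring_1 fps"
  assumes Y0: "fps_nth Y 0 = 0"
  shows "fps_nth (A oo Y) 1 = fps_nth A 1 * fps_nth Y 1"
    and "fps_nth (A oo Y) 2 = fps_nth A 1 * fps_nth Y 2 + fps_nth A 2 * fps_nth Y 1 ^ 2"
    and "fps_nth (A oo Y) 3 = fps_nth A 1 * fps_nth Y 3 + 2 * fps_nth A 2 * fps_nth Y 1 * fps_nth Y 2
                               + fps_nth A 3 * fps_nth Y 1 ^ 3"
proof -
  have diag: "fps_nth (Y ^ n) n = fps_nth Y 1 ^ n" for n
    using startsby_zero_power_nth_same[OF Y0] .
  have sq3: "fps_nth (Y ^ 2) 3 = 2 * fps_nth Y 1 * fps_nth Y 2"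
    using Y0 by (simp add: power2_eq_square fps_mult_nth numeral_3_eq_3 numeral_2_eq_2)
  have sq2: "fps_nth (Y ^ 2) 2 = fps_nth Y 1 ^ 2"
    using diag[of 2] .
  have ranges: "{0..2::nat} = {0, 1, 2}" "{0..3::nat} = {0, 1, 2, 3}"
    by auto
  show "fps_nth (A oo Y) 1 = fps_nth A 1 * fps_nth Y 1"
    using Y0 by (simp add: fps_compose_nth)
  show "fps_nth (A oo Y) 2 = fps_nth A 1 * fps_nth Y 2 + fps_nth A 2 * fps_nth Y 1 ^ 2"
    using sq2 by (simp add: fps_compose_nth ranges)
  show "fps_nth (A oo Y) 3 = fps_nth A 1 * fps_nth Y 3 + 2 * fps_nth A 2 * fps_nth Y 1 * fps_nth Y 2
                               + fps_nth A 3 * fps_nth Y 1 ^ 3"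
    using sq3 diag[of 3] by (simp add: fps_compose_nth ranges algebra_simps)
qed

lemma L_series_nth:
  fixes p1 p2 p3 :: nat and C :: real
  defines "L \<equiv> L_val p1 p2 p3"
  shows "fps_nth (L_series p1 p2 p3 C) 0 = L 0"
    and "fps_nth (L_series p1 p2 p3 C) 1 = L 1 / C"
    and "fps_nth (L_series p1 p2 p3 C) 2 = - L 1 / (2 * C) + L 2 / (2 * C ^ 2)"
    and "fps_nth (L_series p1 p2 p3 C) 3 = L 1 / (3 * C) - L 2 / (2 * C ^ 2) + L 3 / (6 * C ^ 3)"
proof -
  define Y where "Y = fps_const (1 / C) * fps_ln (1 :: real)"
  have Y: "fps_nth Y 0 = 0" "fps_nth Y 1 = 1 / C" "fps_nth Y 2 = - 1 / (2 * C)"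
    "fps_nth Y 3 = 1 / (3 * C)"
    by (simp_all add: Y_def fps_ln_nth numeral_3_eq_3 numeral_2_eq_2)
  note compose = fps_compose_nth_1_2_3[OF Y(1), of "Abs_fps (\<lambda>k. L k / fact k)"]
  show "fps_nth (L_series p1 p2 p3 C) 0 = L 0"
    by (simp add: L_series_def L_def)
  show "fps_nth (L_series p1 p2 p3 C) 1 = L 1 / C"
    and "fps_nth (L_series p1 p2 p3 C) 2 = - L 1 / (2 * C) + L 2 / (2 * C ^ 2)"
    and "fps_nth (L_series p1 p2 p3 C) 3 = L 1 / (3 * C) - L 2 / (2 * C ^ 2) + L 3 / (6 * C ^ 3)"
    unfolding L_series_def L_def[symmetric] Y_def[symmetric] compose Y
    by (simp_all add: fact_numeral power2_eq_square power3_eq_cube field_simps)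
qed

lemma fps_binomial_X_eq_unique:
  fixes R :: "'a::field_char_0 fps"
  assumes "fps_nth R 0 = 0"
  shows "\<exists>!\<tau>. fps_binomial a * fps_X * \<tau> = R"
proof -
  have R: "R = fps_X * fps_shift 1 R"
    using assms by (intro fps_ext) simp
  have unit: "fps_binomial a * fps_binomial (- a) = (1 :: 'a fps)"
    by (simp flip: fps_binomial_add_mult)
  have "fps_binomial a * fps_X * \<tau> = R \<longleftrightarrow> \<tau> = fps_binomial (- a) * fps_shift 1 R" for \<tau>
  proof -
    have "fps_binomial a * fps_X * \<tau> = R \<longleftrightarrow> fps_binomial a * \<tau> = fps_shift 1 R"
      by (subst R) (simp add: ac_simps)
    also have "\<dots> \<longleftrightarrow> \<tau> = fps_binomial (- a) * fps_shift 1 R"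
      by (metis (no_types, lifting) unit mult.assoc mult.commute mult_1)
    finally show ?thesis .
  qed
  then show ?thesis
    by simp
qed

lemma fps_binomial_X_eq_nth:
  fixes a :: "'a::field_char_0"
  assumes "fps_binomial a * fps_X * \<tau> = R"
  shows "fps_nth \<tau> 0 = fps_nth R 1"
    and "fps_nth \<tau> 1 = fps_nth R 2 - a * fps_nth R 1"
    and "fps_nth \<tau> 2 = fps_nth R 3 - a * fps_nth \<tau> 1 - a * (a - 1) / 2 * fps_nth \<tau> 0"
proof -
  have "R = fps_X * (fps_binomial a * \<tau>)"
    using assms by (simp add: ac_simps)
  then have "fps_nth R (Suc n) = fps_nth (fps_binomial a * \<tau>) n" for n
    by simp
  then have R: "fps_nth R (Suc n) = (\<Sum>i=0..n. (a gchoose i) * fps_nth \<tau> (n - i))" for n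
    by (simp add: fps_mult_nth)
  have "a gchoose 2 = a * (a - 1) / 2"
    by (simp add: gbinomial_prod_rev numeral_2_eq_2)
  then show "fps_nth \<tau> 0 = fps_nth R 1"
    and "fps_nth \<tau> 1 = fps_nth R 2 - a * fps_nth R 1"
    and "fps_nth \<tau> 2 = fps_nth R 3 - a * fps_nth \<tau> 1 - a * (a - 1) / 2 * fps_nth \<tau> 0"
    using R[of 0] R[of 1] R[of 2] by (simp_all add: numeral_3_eq_3 numeral_2_eq_2)
qed

lemma tau_coeffs_from_rhs:
  fixes \<phi> P S2 S4 :: real
  assumes eq: "fps_binomial (\<phi> / 4 - 1 / 2) * fps_X * \<tau> = R"
    and R: "fps_nth R 1 = 1" "fps_nth R 2 = - 1 / 2 - P * (1 - S2) / 4"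
      "fps_nth R 3 = 1 / 3 + P * (1 - S2) / 4 + P ^ 2 * (7 - 10 * S2 - 2 * S4 + 5 * S2 ^ 2) / 96"
  shows "fps_nth \<tau> 0 = 1"
    and "fps_nth \<tau> 1 = - (1/4) * (\<phi> + P * (1 - S2))"
    and "fps_nth \<tau> 2 = (1/12) * ((3 * \<phi>^2 + 12 * \<phi> - 4) / 8
                                 + (3 * P / 4) * (\<phi> + 2) * (1 - S2)
                                 + (P^2 / 8) * (2 * (1 - S4) + 5 * (1 - S2)^2))"
proof -
  note nth = fps_binomial_X_eq_nth[OF eq]
  show t0: "fps_nth \<tau> 0 = 1"
    using nth(1) R(1) by simp
  show t1: "fps_nth \<tau> 1 = - (1/4) * (\<phi> + P * (1 - S2))"
    using nth(2) R(1,2) by (simp add: field_simps)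
  show "fps_nth \<tau> 2 = (1/12) * ((3 * \<phi>^2 + 12 * \<phi> - 4) / 8
                                 + (3 * P / 4) * (\<phi> + 2) * (1 - S2)
                                 + (P^2 / 8) * (2 * (1 - S4) + 5 * (1 - S2)^2))"
    using nth(3) unfolding t0 t1 R(3) by (simp add: field_simps power2_eq_square)
qed

lemma hyperbolic_rhs_nth:
  fixes p1 p2 p3 :: nat
  assumes pos: "p1 > 0" "p2 > 0" "p3 > 0"
    and cop: "coprime p1 p2" "coprime p1 p3" "coprime p2 p3"
    and hyp: "1 / real p1 + 1 / real p2 + 1 / real p3 < 1"
  defines "P \<equiv> real (p1 * p2 * p3)"
      and "S2 \<equiv> 1 / real p1 ^ 2 + 1 / real p2 ^ 2 + 1 / real p3 ^ 2"
      and "S4 \<equiv> 1 / real p1 ^ 4 + 1 / real p2 ^ 4 + 1 / real p3 ^ 4"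
      and "R \<equiv> fps_const (1 / 2) * L_series p1 p2 p3 (4 * real (p1 * p2 * p3))"
  shows "fps_nth R 0 = 0"
    and "fps_nth R 1 = 1"
    and "fps_nth R 2 = - 1 / 2 - P * (1 - S2) / 4"
    and "fps_nth R 3 = 1 / 3 + P * (1 - S2) / 4 + P ^ 2 * (7 - 10 * S2 - 2 * S4 + 5 * S2 ^ 2) / 96"
proof -
  have "P > 0"
    using pos by (simp add: P_def)
  note L = L_val_hyperbolic_values[OF pos cop hyp, folded P_def S2_def S4_def]
  show "fps_nth R 0 = 0" "fps_nth R 1 = 1"
    and "fps_nth R 2 = - 1 / 2 - P * (1 - S2) / 4"
    and "fps_nth R 3 = 1 / 3 + P * (1 - S2) / 4 + P ^ 2 * (7 - 10 * S2 - 2 * S4 + 5 * S2 ^ 2) / 96"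
    using \<open>P > 0\<close> unfolding R_def fps_mult_left_const_nth L_series_nth P_def[symmetric] L
    by (simp_all add: field_simps power2_eq_square power3_eq_cube eval_nat_numeral)
qed

lemma sawtooth_of_nat_div:
  assumes "a > 0"
  shows "sawtooth (real k / real a) = (if k mod a = 0 then 0 else real (k mod a) / real a - 1 / 2)"
proof -
  have dec: "real k / real a = real (k div a) + real (k mod a) / real a"
    using assms by (simp add: field_simps flip: of_nat_mult of_nat_add)
  show ?thesis
  proof (cases "k mod a = 0")
    case True
    then have "real k / real a = of_int (int (k div a))"
      using dec by simp
    then show ?thesis
      using True by (simp add: sawtooth_def)
  next
    case False
    have frac: "0 < real (k mod a) / real a" "real (k mod a) / real a < 1"
      using False assms by simp_all
    then have floor: "\<lfloor>real k / real a\<rfloor> = int (k div a)"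
      unfolding dec by (simp add: floor_eq_iff)
    have "real k / real a \<notin> \<int>"
    proof
      assume "real k / real a \<in> \<int>"
      then obtain m where m: "real k / real a = of_int m"
        by (auto elim: Ints_cases)
      with floor have "m = int (k div a)"
        by simp
      with m have "real k / real a = real (k div a)"
        by simp
      with dec frac(1) show False
        by linarith
    qed
    then show ?thesis
      using False floor dec by (simp add: sawtooth_def)
  qed
qed

lemma phi_inv_2_3_5: "phi_inv 2 3 5 = 181 / 30"
proof -
  have ranges: "{1..<2::nat} = {1}" "{1..<3::nat} = {1, 2}" "{1..<5::nat} = {1, 2, 3, 4}"
    by auto
  have "dedekind_sum 15 2 = 0" "dedekind_sum 10 3 = 1 / 18" "dedekind_sum 6 5 = 1 / 5"
    unfolding dedekind_sum_def sawtooth_of_nat_div[OF zero_less_numeral] ranges by simp_all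
  then show ?thesis
    unfolding phi_inv_def by simp
qed

lemma chi111_residue_2_3_5:
  "chi111_residue 2 3 5 (1, 1, 1) = 1" "chi111_residue 2 3 5 (1, 1, -1) = 49"
  "chi111_residue 2 3 5 (1, -1, 1) = 41" "chi111_residue 2 3 5 (1, -1, -1) = 29"
  "chi111_residue 2 3 5 (-1, 1, 1) = 31" "chi111_residue 2 3 5 (-1, 1, -1) = 19"
  "chi111_residue 2 3 5 (-1, -1, 1) = 11" "chi111_residue 2 3 5 (-1, -1, -1) = 59"
  by (simp_all add: chi111_residue_def chi_res_def)

(* Here chi_res takes the values 61 and -1, which wrap around to the residues 1 and 59, so the
   sign-sum formula of the hyperbolic case does not apply. *)
lemma L_val_2_3_5:
  "L_val 2 3 5 k = - (60 ^ (2 * k) / real (2 * k + 1)) *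
     (- bernoulli_poly (2 * k + 1) (1 / 60) + bernoulli_poly (2 * k + 1) (49 / 60)
      + bernoulli_poly (2 * k + 1) (41 / 60) - bernoulli_poly (2 * k + 1) (29 / 60)
      + bernoulli_poly (2 * k + 1) (31 / 60) - bernoulli_poly (2 * k + 1) (19 / 60)
      - bernoulli_poly (2 * k + 1) (11 / 60) + bernoulli_poly (2 * k + 1) (59 / 60))"
proof -
  have "inj_on (chi111_residue 2 3 5) signs" "0 \<notin> chi111_residue 2 3 5 ` signs"
    unfolding signs_explicit by (simp_all add: chi111_residue_2_3_5)
  from sum_chi111[OF this, of "\<lambda>j. bernoulli_poly (2 * k + 1) (real j / (2 * real (2 * 3 * 5)))"]
  show ?thesis
    unfolding L_val_def sum_signs by (simp add: chi111_residue_2_3_5)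
qed

lemma L_val_2_3_5_values:
  "L_val 2 3 5 0 = -2" "L_val 2 3 5 1 = 238" "L_val 2 3 5 2 = -258722" "L_val 2 3 5 3 = 707703118"
  using L_val_2_3_5[of 0] L_val_2_3_5[of 1] L_val_2_3_5[of 2] L_val_2_3_5[of 3]
  by (simp_all add: bernoulli_poly_1[unfolded One_nat_def] bernoulli_poly_3 bernoulli_poly_5
      bernoulli_poly_7 power_divide)

lemma rhs_2_3_5_nth:
  defines "R \<equiv> fps_binomial (1 / 120) + fps_const (1 / 2) * L_series 2 3 5 120"
  shows "fps_nth R 0 = 0" "fps_nth R 1 = 1" "fps_nth R 2 = - 599 / 120" "fps_nth R 3 = 1121881 / 28800"
proof -
  have "(1 / 120 :: real) gchoose 2 = (1 / 120) * (1 / 120 - 1) / 2"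
    "(1 / 120 :: real) gchoose 3 = (1 / 120) * (1 / 120 - 1) * (1 / 120 - 2) / 6"
    by (simp_all add: gbinomial_prod_rev numeral_2_eq_2 numeral_3_eq_3 fact_numeral)
  then show "fps_nth R 0 = 0" "fps_nth R 1 = 1" "fps_nth R 2 = - 599 / 120"
    "fps_nth R 3 = 1121881 / 28800"
    unfolding R_def fps_add_nth fps_mult_left_const_nth fps_binomial_nth L_series_nth
      L_val_2_3_5_values
    by simp_all
qed

theorem mainTheorem7:
  fixes p1 p2 p3 :: nat
  assumes cases: "(p1 > 0 \<and> p2 > 0 \<and> p3 > 0 \<and> coprime p1 p2 \<and> coprime p1 p3 \<and> coprime p2 p3
                    \<and> 1 / real p1 + 1 / real p2 + 1 / real p3 < 1)
                  \<or> (p1 = 2 \<and> p2 = 3 \<and> p3 = 5)"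
  defines "\<phi> \<equiv> phi_inv p1 p2 p3"
      and "P \<equiv> real (p1 * p2 * p3)"
      and "S2 \<equiv> 1 / real p1 ^ 2 + 1 / real p2 ^ 2 + 1 / real p3 ^ 2"
      and "S4 \<equiv> 1 / real p1 ^ 4 + 1 / real p2 ^ 4 + 1 / real p3 ^ 4"
      and "E \<equiv> (if p1 = 2 \<and> p2 = 3 \<and> p3 = 5 then tau_eq_235 else tau_eq_hyp p1 p2 p3)"
  shows "(\<exists>!\<tau>. E \<tau>) \<and> (\<exists>\<tau>. E \<tau> \<and>
           fps_nth \<tau> 0 = 1 \<and>
           fps_nth \<tau> 1 = - (1/4) * (\<phi> + P * (1 - S2)) \<and>
           fps_nth \<tau> 2 = (1/12) * ((3 * \<phi>^2 + 12 * \<phi> - 4) / 8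
                             + (3 * P / 4) * (\<phi> + 2) * (1 - S2)
                             + (P^2 / 8) * (2 * (1 - S4) + 5 * (1 - S2)^2)))"
proof -
  obtain R where E: "\<And>\<tau>. E \<tau> \<longleftrightarrow> fps_binomial (\<phi> / 4 - 1 / 2) * fps_X * \<tau> = R"
    and R: "fps_nth R 0 = 0" "fps_nth R 1 = 1" "fps_nth R 2 = - 1 / 2 - P * (1 - S2) / 4"
      "fps_nth R 3 = 1 / 3 + P * (1 - S2) / 4 + P ^ 2 * (7 - 10 * S2 - 2 * S4 + 5 * S2 ^ 2) / 96"
  proof (cases "p1 = 2 \<and> p2 = 3 \<and> p3 = 5")
    case True
    define R where "R = fps_binomial (1 / 120) + fps_const (1 / 2) * L_series 2 3 5 120"
    show ?thesis
    proof (rule that)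
      show "E \<tau> \<longleftrightarrow> fps_binomial (\<phi> / 4 - 1 / 2) * fps_X * \<tau> = R" for \<tau>
        using True by (simp add: E_def \<phi>_def phi_inv_2_3_5 tau_eq_235_def R_def)
    qed (use rhs_2_3_5_nth[folded R_def] True
         in \<open>simp_all add: P_def S2_def S4_def power2_eq_square\<close>)
  next
    case False
    with cases have hyp: "p1 > 0" "p2 > 0" "p3 > 0" "coprime p1 p2" "coprime p1 p3" "coprime p2 p3"
      "1 / real p1 + 1 / real p2 + 1 / real p3 < 1"
      by auto
    show ?thesis
      using that hyperbolic_rhs_nth[OF hyp, folded P_def S2_def S4_def] False
      by (simp add: E_def \<phi>_def tau_eq_hyp_def P_def)
  qed
  have unique: "\<exists>!\<tau>. E \<tau>"
    using fps_binomial_X_eq_unique[OF R(1)] by (simp only: E)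
  then obtain \<tau> where "E \<tau>"
    by blast
  then have "fps_binomial (\<phi> / 4 - 1 / 2) * fps_X * \<tau> = R"
    by (simp only: E)
  from tau_coeffs_from_rhs[OF this R(2-4)] unique \<open>E \<tau>\<close> show ?thesis
    by blast
qed

end
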